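(* In the crossed product setting described in the context, with $\ast$ an involution on $D$ satisfying $K^\ast\subseteq K$, the following are equivalent: (1) $(k^\ast)^\sigma=(k^\sigma)^\ast$ for every $k\in K$ and $\sigma\in G$; (2) $e_\sigma^\ast e_\sigma\in K$ for every $\sigma\in G$; (3) $f(e_\tau^\ast e_\sigma)=0$ for all $\sigma,\tau\in G$ with $\sigma\neq\tau$.
   Context: Let $K/F$ be a finite Galois extension of fields of characteristic $0$ with Galois group $G$; write $k^\sigma$ for the image of $k\in K$ under $\sigma\in G$. Let $\Phi\colon G\times G\to K\setminus\{0\}$ be a normalized $2$-cocycle, and let $D=(K/F,\Phi)$ be the crossed product: the right $K$-vector space with basis $(e_\sigma)_{\sigma\in G}$, $e_{\mathrm{id}}=1$, with multiplication $(\sum_\sigma e_\sigma c_\sigma)(\sum_\tau e_\tau d_\tau)=\sum_{\sigma,\tau}e_{\sigma\tau}\Phi(\sigma,\tau)c_\sigma^\tau d_\tau$ (so $ke_\sigma=e_\sigma k^\sigma$ for $k\in K$). Assume $D$ is a division algebra (it is central simple over $F$ with maximal subfield $K$). An involution is an additive anti-automorphism of order at most $2$. Define $f\colon D\to K$ by $f(\sum_\sigma e_\sigma c_\sigma)=c_{\mathrm{id}}$. *)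

theory Defs
  imports Main
begin

text \<open>The field K is the type 'k (characteristic 0). G is a finite group of field
automorphisms of K; F is its fixed field, so K/F is Galois with group G (Artin).
We write k^sigma as the function application sigma k. Since the action is a right
action, (k^sigma)^tau = k^(sigma tau), the group product sigma tau is the
composition tau o sigma.\<close>

definition field_aut :: "('k::field \<Rightarrow> 'k) \<Rightarrow> bool" where
  "field_aut s \<longleftrightarrow> bij s \<and> (\<forall>x y. s (x + y) = s x + s y) \<and> (\<forall>x y. s (x * y) = s x * s y) \<and> s 1 = 1"

definition gmul :: "('k \<Rightarrow> 'k) \<Rightarrow> ('k \<Rightarrow> 'k) \<Rightarrow> ('k \<Rightarrow> 'k)" where
  "gmul s t = t \<circ> s"

definition aut_group :: "('k::field \<Rightarrow> 'k) set \<Rightarrow> bool" where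
  "aut_group G \<longleftrightarrow> finite G \<and> id \<in> G \<and> (\<forall>s\<in>G. field_aut s)
     \<and> (\<forall>s\<in>G. \<forall>t\<in>G. gmul s t \<in> G) \<and> (\<forall>s\<in>G. inv s \<in> G)"

definition fixed_field :: "('k::field \<Rightarrow> 'k) set \<Rightarrow> 'k set" where
  "fixed_field G = {x. \<forall>s\<in>G. s x = x}"

definition normalized_cocycle :: "('k::field \<Rightarrow> 'k) set \<Rightarrow> (('k \<Rightarrow> 'k) \<Rightarrow> ('k \<Rightarrow> 'k) \<Rightarrow> 'k) \<Rightarrow> bool" where
  "normalized_cocycle G Phi \<longleftrightarrow>
     (\<forall>s\<in>G. \<forall>t\<in>G. Phi s t \<noteq> 0)
   \<and> (\<forall>s\<in>G. Phi id s = 1 \<and> Phi s id = 1)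
   \<and> (\<forall>s\<in>G. \<forall>t\<in>G. \<forall>r\<in>G.
        Phi (gmul s t) r * r (Phi s t) = Phi s (gmul t r) * Phi t r)"

text \<open>Elements of the crossed product D = (K/F, Phi): an element sum_s e_s c_s is
represented by its coefficient function c, which vanishes outside G.\<close>
type_synonym 'k cp = "('k \<Rightarrow> 'k) \<Rightarrow> 'k"

definition cp_carrier :: "('k::field \<Rightarrow> 'k) set \<Rightarrow> 'k cp set" where
  "cp_carrier G = {c. \<forall>s. s \<notin> G \<longrightarrow> c s = 0}"

definition cp_add :: "('k::field \<Rightarrow> 'k) set \<Rightarrow> 'k cp \<Rightarrow> 'k cp \<Rightarrow> 'k cp" where
  "cp_add G c d = (\<lambda>r. if r \<in> G then c r + d r else 0)"

definition cp_mult :: "('k::field \<Rightarrow> 'k) set \<Rightarrow> (('k \<Rightarrow> 'k) \<Rightarrow> ('k \<Rightarrow> 'k) \<Rightarrow> 'k)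
    \<Rightarrow> 'k cp \<Rightarrow> 'k cp \<Rightarrow> 'k cp" where
  "cp_mult G Phi c d = (\<lambda>r. if r \<in> G then
      (\<Sum>s\<in>G. \<Sum>t\<in>G. if gmul s t = r then Phi s t * t (c s) * d t else 0) else 0)"

definition cp_basis :: "('k::field \<Rightarrow> 'k) \<Rightarrow> 'k cp" where
  "cp_basis s = (\<lambda>r. if r = s then 1 else 0)"

definition cp_emb :: "'k::field \<Rightarrow> 'k cp" where
  "cp_emb k = (\<lambda>r. if r = id then k else 0)"

definition cp_f :: "'k::field cp \<Rightarrow> 'k" where
  "cp_f x = x id"

definition cp_division :: "('k::field \<Rightarrow> 'k) set \<Rightarrow> (('k \<Rightarrow> 'k) \<Rightarrow> ('k \<Rightarrow> 'k) \<Rightarrow> 'k) \<Rightarrow> bool" where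
  "cp_division G Phi \<longleftrightarrow> (\<forall>x\<in>cp_carrier G. x \<noteq> (\<lambda>_. 0) \<longrightarrow>
      (\<exists>y\<in>cp_carrier G. cp_mult G Phi x y = cp_emb 1 \<and> cp_mult G Phi y x = cp_emb 1))"

text \<open>Involution: additive anti-automorphism of order at most 2 (bijectivity follows
from star o star = id).\<close>
definition cp_involution :: "('k::field \<Rightarrow> 'k) set \<Rightarrow> (('k \<Rightarrow> 'k) \<Rightarrow> ('k \<Rightarrow> 'k) \<Rightarrow> 'k)
    \<Rightarrow> ('k cp \<Rightarrow> 'k cp) \<Rightarrow> bool" where
  "cp_involution G Phi st \<longleftrightarrow>
     (\<forall>x\<in>cp_carrier G. st x \<in> cp_carrier G)
   \<and> (\<forall>x\<in>cp_carrier G. \<forall>y\<in>cp_carrier G. st (cp_add G x y) = cp_add G (st x) (st y))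
   \<and> (\<forall>x\<in>cp_carrier G. \<forall>y\<in>cp_carrier G. st (cp_mult G Phi x y) = cp_mult G Phi (st y) (st x))
   \<and> (\<forall>x\<in>cp_carrier G. st (st x) = x)"

text \<open>The restriction of the involution to K (meaningful when K^* is contained in K).\<close>
definition kstar :: "('k::field cp \<Rightarrow> 'k cp) \<Rightarrow> 'k \<Rightarrow> 'k" where
  "kstar st k = cp_f (st (cp_emb k))"

end

theory Submission imports Defs begin

(* Write a_s for the image of the basis element e_s under the involution.
   The three conditions of the proposition are each shown equivalent to one
   intermediate statement, star_monomial: every a_s is supported on s^-1 alone,
   i.e. a_s lies in e_{s^-1} K.

   Conditions (2) and (3) are then read off directly from the coefficients of
   a_s e_s and a_t e_s; this needs nothing about the involution.
   Condition (1) uses the involution: applying it to k e_s = e_s k^s gives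
   (a_s)_r kstar(k) = (kstar(k^s))^r (a_s)_r for every r, so any r with
   (a_s)_r <> 0 must be s^-1 when (1) holds; conversely (a_s)_{s^-1} <> 0 yields (1). *)

lemma field_aut_zero:
  assumes "field_aut s" shows "s (0::'k::field) = 0"
proof -
  have "s 0 + s 0 = s 0 + 0"
    using assms unfolding field_aut_def by (metis add_0_right)
  thus ?thesis by (simp only: add_left_cancel)
qed

lemma field_aut_eq_0_iff:
  assumes "field_aut s" shows "s (x::'k::field) = 0 \<longleftrightarrow> x = 0"
  using assms field_aut_zero[OF assms] unfolding field_aut_def bij_def by (metis injD)

text \<open>The intermediate condition: e_s^* is a K-multiple of e_{s^-1} for every s.\<close>
definition star_monomial :: "('k::field \<Rightarrow> 'k) set \<Rightarrow> ('k cp \<Rightarrow> 'k cp) \<Rightarrow> bool" where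
  "star_monomial G st \<longleftrightarrow> (\<forall>s\<in>G. \<forall>\<rho>\<in>G. \<rho> \<noteq> inv s \<longrightarrow> st (cp_basis s) \<rho> = 0)"

context
  fixes G :: "('k::field \<Rightarrow> 'k) set"
  assumes group: "aut_group G"
begin

lemma aut_group_field_aut: "s \<in> G \<Longrightarrow> field_aut s"
  using group by (simp add: aut_group_def)

lemma aut_group_finite: "finite G"
  using group by (simp add: aut_group_def)

lemma aut_group_id: "id \<in> G"
  using group by (simp add: aut_group_def)

lemma aut_group_comp: "s \<in> G \<Longrightarrow> t \<in> G \<Longrightarrow> t \<circ> s \<in> G"
  using group by (metis aut_group_def gmul_def)

lemma aut_group_inv: "s \<in> G \<Longrightarrow> inv s \<in> G"
  using group by (simp add: aut_group_def)

lemma aut_group_inv_left: "s \<in> G \<Longrightarrow> inv s \<circ> s = id"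
  using aut_group_field_aut by (simp add: field_aut_def bij_def)

lemma aut_group_inv_right: "s \<in> G \<Longrightarrow> s \<circ> inv s = id"
  using aut_group_field_aut by (simp add: field_aut_def bij_def flip: surj_iff)

lemma aut_group_inv_inv: "s \<in> G \<Longrightarrow> inv (inv s) = s"
  using aut_group_field_aut by (simp add: field_aut_def inv_inv_eq)

lemma aut_group_apply_eq_0_iff: "s \<in> G \<Longrightarrow> s x = 0 \<longleftrightarrow> x = 0"
  using aut_group_field_aut field_aut_eq_0_iff by blast

text \<open>Given the right factor t, the left factor of a product s t = r in G is
  forced to be t^-1 r; this is the reindexing behind every coefficient formula.\<close>
lemma gmul_eq_iff:
  assumes "t \<in> G" shows "gmul s t = r \<longleftrightarrow> s = inv t \<circ> r"
proof
  assume "gmul s t = r"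
  hence "inv t \<circ> r = inv t \<circ> (t \<circ> s)" by (simp add: gmul_def)
  thus "s = inv t \<circ> r" using aut_group_inv_left[OF assms] by (simp add: o_assoc)
next
  assume "s = inv t \<circ> r"
  thus "gmul s t = r" using aut_group_inv_right[OF assms] by (simp add: gmul_def o_assoc)
qed

lemma aut_group_comp_eq_id: "s \<in> G \<Longrightarrow> s \<circ> \<rho> = id \<longleftrightarrow> \<rho> = inv s"
  using gmul_eq_iff[of s \<rho> id] by (auto simp: gmul_def)

section \<open>Coefficients of products in the crossed product\<close>

lemma cp_in_K_iff:
  assumes "\<forall>r. r \<notin> G \<longrightarrow> x r = 0"
  shows "(\<exists>k. x = cp_emb k) \<longleftrightarrow> (\<forall>r\<in>G. r \<noteq> id \<longrightarrow> x r = 0)"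
proof
  assume "\<forall>r\<in>G. r \<noteq> id \<longrightarrow> x r = 0"
  hence "x r = cp_emb (x id) r" for r
    using assms by (cases "r = id"; cases "r \<in> G") (simp_all add: cp_emb_def)
  thus "\<exists>k. x = cp_emb k" by blast
qed (auto simp: cp_emb_def)

lemma cp_mult_coeff:
  assumes r: "r \<in> G"
  shows "cp_mult G Phi x y r = (\<Sum>t\<in>G. Phi (inv t \<circ> r) t * t (x (inv t \<circ> r)) * y t)"
proof -
  have "cp_mult G Phi x y r
      = (\<Sum>s\<in>G. \<Sum>t\<in>G. if gmul s t = r then Phi s t * t (x s) * y t else 0)"
    using r by (simp add: cp_mult_def)
  also have "\<dots> = (\<Sum>t\<in>G. \<Sum>s\<in>G. if gmul s t = r then Phi s t * t (x s) * y t else 0)"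
    by (rule sum.swap)
  also have "\<dots> = (\<Sum>t\<in>G. \<Sum>s\<in>G. if s = inv t \<circ> r then Phi s t * t (x s) * y t else 0)"
    by (intro sum.cong refl) (simp add: gmul_eq_iff)
  also have "\<dots> = (\<Sum>t\<in>G. Phi (inv t \<circ> r) t * t (x (inv t \<circ> r)) * y t)"
    using r by (simp add: aut_group_finite aut_group_comp aut_group_inv)
  finally show ?thesis .
qed

lemma cp_mult_outside: "r \<notin> G \<Longrightarrow> cp_mult G Phi x y r = 0"
  by (simp add: cp_mult_def)

lemma cp_mult_basis_right:
  assumes "r \<in> G" "s \<in> G"
  shows "cp_mult G Phi x (cp_basis s) r = Phi (inv s \<circ> r) s * s (x (inv s \<circ> r))"
proof -
  have "cp_mult G Phi x (cp_basis s) r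
      = (\<Sum>t\<in>G. if t = s then Phi (inv t \<circ> r) t * t (x (inv t \<circ> r)) else 0)"
    unfolding cp_mult_coeff[OF assms(1)] by (intro sum.cong) (auto simp: cp_basis_def)
  thus ?thesis using assms(2) by (simp add: aut_group_finite)
qed

lemma cp_mult_basis_right_shift:
  assumes "s \<in> G" "\<rho> \<in> G"
  shows "cp_mult G Phi x (cp_basis s) (s \<circ> \<rho>) = Phi \<rho> s * s (x \<rho>)"
  using assms aut_group_inv_left[OF assms(1)]
  by (simp add: cp_mult_basis_right aut_group_comp o_assoc)

context
  fixes Phi :: "('k \<Rightarrow> 'k) \<Rightarrow> ('k \<Rightarrow> 'k) \<Rightarrow> 'k"
  assumes cocycle: "normalized_cocycle G Phi"
begin

lemma cocycle_nonzero: "s \<in> G \<Longrightarrow> t \<in> G \<Longrightarrow> Phi s t \<noteq> 0"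
  using cocycle by (simp add: normalized_cocycle_def)

lemma cp_mult_emb_right:
  assumes r: "r \<in> G" shows "cp_mult G Phi x (cp_emb k) r = x r * k"
proof -
  have "cp_mult G Phi x (cp_emb k) r
      = (\<Sum>t\<in>G. if t = id then Phi (inv t \<circ> r) t * t (x (inv t \<circ> r)) * k else 0)"
    unfolding cp_mult_coeff[OF r] by (intro sum.cong) (auto simp: cp_emb_def)
  thus ?thesis using r cocycle by (simp add: aut_group_finite aut_group_id normalized_cocycle_def)
qed

lemma cp_mult_emb_left:
  assumes r: "r \<in> G" shows "cp_mult G Phi (cp_emb k) y r = r k * y r"
proof -
  have left_id: "inv t \<circ> r = id \<longleftrightarrow> t = r" if "t \<in> G" for t
    using gmul_eq_iff[OF that, of id r] by (auto simp: gmul_def)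
  have "cp_mult G Phi (cp_emb k) y r = (\<Sum>t\<in>G. if t = r then Phi id t * t k * y t else 0)"
    unfolding cp_mult_coeff[OF r]
    by (intro sum.cong refl) (auto simp: left_id aut_group_inv_left cp_emb_def aut_group_apply_eq_0_iff)
  also have "\<dots> = Phi id r * r k * y r"
    using r by (simp add: aut_group_finite)
  finally show ?thesis
    using r cocycle by (simp add: normalized_cocycle_def)
qed

lemma emb_basis_commute:
  "cp_mult G Phi (cp_emb k) (cp_basis s) = cp_mult G Phi (cp_basis s) (cp_emb (s k))"
proof
  fix r show "cp_mult G Phi (cp_emb k) (cp_basis s) r = cp_mult G Phi (cp_basis s) (cp_emb (s k)) r"
    by (cases "r \<in> G") (simp_all add: cp_mult_emb_left cp_mult_emb_right cp_mult_outside cp_basis_def)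
qed

section \<open>Conditions (2) and (3) in terms of the coefficients of e_s^*\<close>

text \<open>Condition (2): e_s^* e_s lies in K exactly when e_s^* is supported on s^-1,
  because the r-coefficient of e_s^* e_s is a unit times the (s^-1 r)-coefficient of e_s^*.
  Here st may be any map on the crossed product.\<close>
lemma cond2_iff_star_monomial:
  "(\<forall>s\<in>G. \<exists>k. cp_mult G Phi (st (cp_basis s)) (cp_basis s) = cp_emb k) \<longleftrightarrow> star_monomial G st"
proof -
  have coeff: "cp_mult G Phi (st (cp_basis s)) (cp_basis s) (s \<circ> \<rho>) = 0
      \<longleftrightarrow> st (cp_basis s) \<rho> = 0" if "s \<in> G" "\<rho> \<in> G" for s \<rho>
    using that by (simp add: cp_mult_basis_right_shift cocycle_nonzero aut_group_apply_eq_0_iff)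
  show ?thesis
  proof
    assume in_K_all: "\<forall>s\<in>G. \<exists>k. cp_mult G Phi (st (cp_basis s)) (cp_basis s) = cp_emb k"
    show "star_monomial G st" unfolding star_monomial_def
    proof (intro ballI impI)
      fix s \<rho> assume s: "s \<in> G" and \<rho>: "\<rho> \<in> G" and ne: "\<rho> \<noteq> inv s"
      obtain k where "cp_mult G Phi (st (cp_basis s)) (cp_basis s) = cp_emb k"
        using in_K_all s by blast
      hence "cp_mult G Phi (st (cp_basis s)) (cp_basis s) (s \<circ> \<rho>) = 0"
        using aut_group_comp_eq_id[OF s, of \<rho>] ne by (simp add: cp_emb_def)
      thus "st (cp_basis s) \<rho> = 0" using coeff[OF s \<rho>] by simp
    qed
  next
    assume mono: "star_monomial G st"
    show "\<forall>s\<in>G. \<exists>k. cp_mult G Phi (st (cp_basis s)) (cp_basis s) = cp_emb k"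
    proof
      fix s assume s: "s \<in> G"
      have "cp_mult G Phi (st (cp_basis s)) (cp_basis s) r = 0" if r: "r \<in> G" "r \<noteq> id" for r
      proof -
        define \<rho> where "\<rho> = inv s \<circ> r"
        have \<rho>: "\<rho> \<in> G" and r_eq: "r = s \<circ> \<rho>"
          using r s aut_group_inv_right[OF s] by (simp_all add: \<rho>_def aut_group_comp aut_group_inv o_assoc)
        have "\<rho> \<noteq> inv s" using aut_group_comp_eq_id[OF s, of \<rho>] r_eq r(2) by simp
        thus ?thesis using mono s \<rho> coeff[OF s \<rho>] r_eq by (simp add: star_monomial_def)
      qed
      thus "\<exists>k. cp_mult G Phi (st (cp_basis s)) (cp_basis s) = cp_emb k"
        by (simp add: cp_in_K_iff cp_mult_outside)
    qed
  qed
qed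

text \<open>Condition (3): f(e_t^* e_s) is a unit times the s^-1-coefficient of e_t^*.\<close>
lemma cond3_iff_star_monomial:
  "(\<forall>s\<in>G. \<forall>t\<in>G. s \<noteq> t \<longrightarrow> cp_f (cp_mult G Phi (st (cp_basis t)) (cp_basis s)) = 0)
     \<longleftrightarrow> star_monomial G st"
proof -
  have f_coeff: "cp_f (cp_mult G Phi (st (cp_basis t)) (cp_basis s)) = 0
      \<longleftrightarrow> st (cp_basis t) (inv s) = 0" if "s \<in> G" for s t
    using that aut_group_id aut_group_inv
    by (simp add: cp_f_def cp_mult_basis_right cocycle_nonzero aut_group_apply_eq_0_iff)
  show ?thesis
  proof
    assume off_diag: "\<forall>s\<in>G. \<forall>t\<in>G. s \<noteq> t \<longrightarrow> cp_f (cp_mult G Phi (st (cp_basis t)) (cp_basis s)) = 0"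
    show "star_monomial G st" unfolding star_monomial_def
    proof (intro ballI impI)
      fix t \<rho> assume t: "t \<in> G" and \<rho>: "\<rho> \<in> G" and ne: "\<rho> \<noteq> inv t"
      have "inv \<rho> \<noteq> t" using ne aut_group_inv_inv[OF \<rho>] by auto
      hence "st (cp_basis t) (inv (inv \<rho>)) = 0"
        using off_diag f_coeff aut_group_inv[OF \<rho>] t by blast
      thus "st (cp_basis t) \<rho> = 0" by (simp add: aut_group_inv_inv[OF \<rho>])
    qed
  next
    assume mono: "star_monomial G st"
    show "\<forall>s\<in>G. \<forall>t\<in>G. s \<noteq> t \<longrightarrow> cp_f (cp_mult G Phi (st (cp_basis t)) (cp_basis s)) = 0"
    proof (intro ballI impI)
      fix s t assume s: "s \<in> G" and t: "t \<in> G" and ne: "s \<noteq> t"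
      have "inv s \<noteq> inv t" using ne aut_group_inv_inv[OF s] aut_group_inv_inv[OF t] by metis
      hence "st (cp_basis t) (inv s) = 0"
        using mono aut_group_inv[OF s] t unfolding star_monomial_def by blast
      thus "cp_f (cp_mult G Phi (st (cp_basis t)) (cp_basis s)) = 0" using f_coeff[OF s] by simp
    qed
  qed
qed

end
end

section \<open>Crossed products with an involution preserving K\<close>

locale cp_with_involution =
  fixes G :: "('k::field \<Rightarrow> 'k) set"
    and Phi :: "('k \<Rightarrow> 'k) \<Rightarrow> ('k \<Rightarrow> 'k) \<Rightarrow> 'k"
    and st :: "'k cp \<Rightarrow> 'k cp"
  assumes group: "aut_group G"
    and cocycle: "normalized_cocycle G Phi"
    and involution: "cp_involution G Phi st"
    and K_stable: "\<forall>k. \<exists>k'. st (cp_emb k) = cp_emb k'"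
begin

lemma emb_carrier: "cp_emb k \<in> cp_carrier G"
  using aut_group_id[OF group] by (auto simp: cp_emb_def cp_carrier_def)

lemma basis_carrier: "s \<in> G \<Longrightarrow> cp_basis s \<in> cp_carrier G"
  by (auto simp: cp_basis_def cp_carrier_def)

lemma star_carrier: "x \<in> cp_carrier G \<Longrightarrow> st x \<in> cp_carrier G"
  using involution by (simp add: cp_involution_def)

lemma star_mult:
  "x \<in> cp_carrier G \<Longrightarrow> y \<in> cp_carrier G \<Longrightarrow> st (cp_mult G Phi x y) = cp_mult G Phi (st y) (st x)"
  using involution by (simp add: cp_involution_def)

lemma star_star: "x \<in> cp_carrier G \<Longrightarrow> st (st x) = x"
  using involution by (simp add: cp_involution_def)

lemma star_emb: "st (cp_emb k) = cp_emb (kstar st k)"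
  using K_stable by (metis kstar_def cp_f_def cp_emb_def)

lemma kstar_kstar: "kstar st (kstar st k) = k"
proof -
  have "cp_emb k = cp_emb (kstar st (kstar st k))"
    using star_star[OF emb_carrier] by (simp add: star_emb)
  thus ?thesis by (metis cp_emb_def)
qed

text \<open>The involution fixes 0, being additive; hence e_s^* is nonzero.\<close>
lemma star_zero: "st (\<lambda>_. 0) = (\<lambda>_. 0)"
proof -
  let ?z = "\<lambda>_::'k \<Rightarrow> 'k. 0::'k"
  have z: "?z \<in> cp_carrier G" by (simp add: cp_carrier_def)
  have "cp_add G ?z ?z = ?z" by (auto simp: cp_add_def)
  hence "st ?z = cp_add G (st ?z) (st ?z)"
    using involution z unfolding cp_involution_def by metis
  hence "st ?z r = (if r \<in> G then st ?z r + st ?z r else 0)" for r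
    by (metis cp_add_def)
  thus ?thesis by (metis add_cancel_right_right)
qed

lemma star_basis_nonzero: "s \<in> G \<Longrightarrow> st (cp_basis s) \<noteq> (\<lambda>_. 0)"
  using star_star[OF basis_carrier] star_zero by (metis cp_basis_def zero_neq_one)

text \<open>Applying * to k e_s = e_s k^s gives e_s^* k^* = (k^s)^* e_s^*; comparing
  r-coefficients: (e_s^*)_r k^* = ((k^s)^*)^r (e_s^*)_r.\<close>
lemma star_basis_twist:
  assumes s: "s \<in> G" and r: "r \<in> G"
  shows "st (cp_basis s) r * kstar st k = r (kstar st (s k)) * st (cp_basis s) r"
proof -
  have "cp_mult G Phi (st (cp_basis s)) (cp_emb (kstar st k))
      = st (cp_mult G Phi (cp_emb k) (cp_basis s))"
    by (simp add: star_mult[OF emb_carrier basis_carrier[OF s]] star_emb)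
  also have "\<dots> = st (cp_mult G Phi (cp_basis s) (cp_emb (s k)))"
    by (simp add: emb_basis_commute[OF group cocycle])
  also have "\<dots> = cp_mult G Phi (cp_emb (kstar st (s k))) (st (cp_basis s))"
    by (simp add: star_mult[OF basis_carrier[OF s] emb_carrier] star_emb)
  finally have "cp_mult G Phi (st (cp_basis s)) (cp_emb (kstar st k))
      = cp_mult G Phi (cp_emb (kstar st (s k))) (st (cp_basis s))" .
  thus ?thesis
    by (metis cp_mult_emb_left[OF group cocycle r] cp_mult_emb_right[OF group cocycle r])
qed

lemma cond1_iff_star_monomial:
  "(\<forall>k. \<forall>s\<in>G. s (kstar st k) = kstar st (s k)) \<longleftrightarrow> star_monomial G st"
proof
  assume commute: "\<forall>k. \<forall>s\<in>G. s (kstar st k) = kstar st (s k)"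
  show "star_monomial G st" unfolding star_monomial_def
  proof (intro ballI impI)
    fix s \<rho> assume s: "s \<in> G" and \<rho>: "\<rho> \<in> G" and ne: "\<rho> \<noteq> inv s"
    show "st (cp_basis s) \<rho> = 0"
    proof (rule ccontr)
      assume nz: "st (cp_basis s) \<rho> \<noteq> 0"
      have "kstar st k = \<rho> (s (kstar st k))" for k
        using star_basis_twist[OF s \<rho>, of k] nz commute s by (simp add: mult.commute)
      hence "\<rho> (s j) = j" for j by (metis kstar_kstar)
      hence "\<rho> \<circ> s = id" by (simp add: fun_eq_iff)
      have "\<rho> = \<rho> \<circ> (s \<circ> inv s)" by (simp add: aut_group_inv_right[OF group s])
      also have "\<dots> = (\<rho> \<circ> s) \<circ> inv s" by (simp add: o_assoc)
      also have "\<dots> = inv s" using \<open>\<rho> \<circ> s = id\<close> by simp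
      finally show False using ne by simp
    qed
  qed
next
  assume mono: "star_monomial G st"
  show "\<forall>k. \<forall>s\<in>G. s (kstar st k) = kstar st (s k)"
  proof (intro allI ballI)
    fix k s assume s: "s \<in> G"
    have inv_s: "inv s \<in> G" using aut_group_inv[OF group s] .
    have "st (cp_basis s) (inv s) \<noteq> 0"
    proof
      assume "st (cp_basis s) (inv s) = 0"
      hence "st (cp_basis s) r = 0" for r
        using mono s star_carrier[OF basis_carrier[OF s]]
        unfolding star_monomial_def cp_carrier_def by (cases "r = inv s"; cases "r \<in> G") simp_all
      hence "st (cp_basis s) = (\<lambda>_. 0)" by blast
      thus False using star_basis_nonzero[OF s] by simp
    qed
    hence "kstar st k = inv s (kstar st (s k))"
      using star_basis_twist[OF s inv_s, of k] by (simp add: mult.commute)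
    thus "s (kstar st k) = kstar st (s k)"
      using aut_group_inv_right[OF group s] by (metis comp_apply id_apply)
  qed
qed

end

theorem proposition3p2:
  fixes G :: "('k::field_char_0 \<Rightarrow> 'k) set"
    and Phi :: "('k \<Rightarrow> 'k) \<Rightarrow> ('k \<Rightarrow> 'k) \<Rightarrow> 'k"
    and st :: "'k cp \<Rightarrow> 'k cp"
  assumes "aut_group G"
    and "normalized_cocycle G Phi"
    and "cp_division G Phi"
    and "cp_involution G Phi st"
    and "\<forall>k. \<exists>k'. st (cp_emb k) = cp_emb k'"
  shows "((\<forall>k. \<forall>s\<in>G. s (kstar st k) = kstar st (s k))
          \<longleftrightarrow> (\<forall>s\<in>G. \<exists>k. cp_mult G Phi (st (cp_basis s)) (cp_basis s) = cp_emb k))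
       \<and> ((\<forall>s\<in>G. \<exists>k. cp_mult G Phi (st (cp_basis s)) (cp_basis s) = cp_emb k)
          \<longleftrightarrow> (\<forall>s\<in>G. \<forall>t\<in>G. s \<noteq> t \<longrightarrow> cp_f (cp_mult G Phi (st (cp_basis t)) (cp_basis s)) = 0))"
proof -
  interpret cp_with_involution G Phi st
    using assms(1,2,4,5) by unfold_locales
  show ?thesis
    using cond1_iff_star_monomial
      cond2_iff_star_monomial[OF assms(1,2), of st] cond3_iff_star_monomial[OF assms(1,2), of st]
    by simp
qed

end
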